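(* For any distribution $D$ on $\mathcal X\times\{-1,1\}$, any self-complemented set $\mathcal H$ of voters $\mathcal X\to[-1,1]$, any prior $P$ on $\mathcal H$, any convex function $\mathcal D:[0,1]\times[0,1]\to\mathbb R$ with $\mathcal D(q,p)=\mathcal D(1-q,1-p)$ for all $q,p$, any $m'>0$ and any $\delta\in(0,1]$, with probability at least $1-\delta$ over $S\sim D^m$, for all posteriors $Q$ aligned on $P$, $$\mathcal D\big(R_S(G_Q),R_D(G_Q)\big)\ \le\ \frac1{m'}\ln\Big(\frac1\delta\,\mathbb E_{S\sim D^m}\mathbb E_{f\sim P}e^{m'\mathcal D(\mathcal L_{\ell,S}(f),\mathcal L_{\ell,D}(f))}\Big).$$
   Context: $\mathcal L_\ell(a,y)=\tfrac12(1-ya)$; $\mathcal L_{\ell,D'}(f)=\mathbb E_{(x,y)\sim D'}\mathcal L_\ell(f(x),y)$ and $R_{D'}(G_Q)=\mathbb E_{f\sim Q}\mathcal L_{\ell,D'}(f)$, for $D'=D$ or $D'=S$ (uniform on the sample). $\mathcal H$ is self-complemented if there is a bijection $c:\mathcal H\to\mathcal H$ with $c(f)=-f$ for all $f$. A distribution $Q$ on $\mathcal H$ is aligned on $P$ if $Q(f)+Q(c(f))=P(f)+P(c(f))$ for all $f\in\mathcal H$ (where $Q(f),P(f)$ are probability masses, or densities with respect to a common reference measure invariant under $c$). $P$ is independent of $S$. *)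

theory Defs
  imports "HOL-Probability.Probability"
begin

definition lin_loss :: "real \<Rightarrow> real \<Rightarrow> real" where
  "lin_loss a y = (1 - y * a) / 2"

definition true_risk :: "('x \<times> real) measure \<Rightarrow> ('x \<Rightarrow> real) \<Rightarrow> real" where
  "true_risk D' f = (\<integral>z. lin_loss (f (fst z)) (snd z) \<partial>D')"

definition emp_risk :: "nat \<Rightarrow> (nat \<Rightarrow> 'x \<times> real) \<Rightarrow> ('x \<Rightarrow> real) \<Rightarrow> real" where
  "emp_risk m S f = (\<Sum>i<m. lin_loss (f (fst (S i))) (snd (S i))) / real m"

text \<open>Risk of the Gibbs classifier G_Q, given a per-voter risk functional L.\<close>
definition gibbs_risk :: "('x \<Rightarrow> real) measure \<Rightarrow> (('x \<Rightarrow> real) \<Rightarrow> real) \<Rightarrow> real" where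
  "gibbs_risk Q L = (\<integral>f. L f \<partial>Q)"

text \<open>Q (density q) is aligned on P (density p) w.r.t. the complement c f = - f.\<close>
definition aligned :: "('x \<Rightarrow> real) set \<Rightarrow> (('x \<Rightarrow> real) \<Rightarrow> real) \<Rightarrow> (('x \<Rightarrow> real) \<Rightarrow> real) \<Rightarrow> bool" where
  "aligned H q p \<longleftrightarrow> (\<forall>f\<in>H. q f + q (\<lambda>x. - f x) = p f + p (\<lambda>x. - f x))"

end

theory Submission
  imports Defs
begin

text \<open>For a fixed sample, both Gibbs risks are \<open>Q\<close>-averages of per-voter risks with values
  in \<open>[0,1]\<close>. Jensen's inequality for the convex \<open>\<D>\<close>, combined with the convexity and
  monotonicity of \<open>exp\<close>, bounds \<open>exp (m' \<D>(R\<^sub>S(G\<^sub>Q), R\<^sub>D(G\<^sub>Q)))\<close> by the \<open>Q\<close>-average of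
  \<open>exp (m' \<D>(L\<^sub>S f, L\<^sub>D f))\<close>. Negating a voter turns both of its risks \<open>r\<close> into \<open>1 - r\<close>, so by
  the symmetry of \<open>\<D>\<close> this integrand is invariant under \<open>f \<mapsto> -f\<close>; an aligned \<open>Q\<close> therefore
  gives it the same average as the prior \<open>P\<close>, which no longer depends on \<open>Q\<close>. Markov's
  inequality for this \<open>P\<close>-average, as a function of the sample, gives the bound uniformly
  in \<open>Q\<close>.\<close>

lemma convex_strict_epigraph:
  assumes cvx: "convex_on S f"
  shows "convex {(y, t). y \<in> S \<and> f y < t}"
proof (intro convexI, clarsimp, intro conjI)
  fix y1 t1 y2 t2 and u v :: real
  assume y: "y1 \<in> S" "f y1 < t1" "y2 \<in> S" "f y2 < t2" and uv: "0 \<le> u" "0 \<le> v" "u + v = 1"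
  show "u *\<^sub>R y1 + v *\<^sub>R y2 \<in> S" using cvx y uv by (simp add: convex_on_def convex_def)
  have "f (u *\<^sub>R y1 + v *\<^sub>R y2) \<le> u * f y1 + v * f y2" using cvx y uv by (simp add: convex_on_def)
  also have "\<dots> < u * t1 + v * t2"
  proof (cases "u = 0")
    case False
    then show ?thesis using uv y mult_strict_left_mono[of "f y1" t1 u] mult_left_mono[of "f y2" t2 v]
      by linarith
  qed (use uv y in simp)
  finally show "f (u *\<^sub>R y1 + v *\<^sub>R y2) < u * t1 + v * t2" .
qed

lemma inner_nonneg_on_ball_imp_eq_0:
  fixes g x :: "'a::real_inner"
  assumes "0 < e" and nonneg: "\<forall>y\<in>ball x e. 0 \<le> g \<bullet> (y - x)"
  shows "g = 0"
proof (rule ccontr)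
  assume "g \<noteq> 0"
  define y where "y = x - (e / 2 / norm g) *\<^sub>R g"
  have "y \<in> ball x e" using \<open>0 < e\<close> \<open>g \<noteq> 0\<close> by (simp add: y_def dist_norm)
  moreover have "g \<bullet> (y - x) = - (e / 2) * norm g"
    using \<open>g \<noteq> 0\<close> by (simp add: y_def power2_norm_eq_inner[symmetric] power2_eq_square)
  ultimately have "0 \<le> - (e / 2) * norm g" using nonneg by metis
  moreover have "0 < e / 2 * norm g" using \<open>0 < e\<close> \<open>g \<noteq> 0\<close> by simp
  ultimately show False by linarith
qed

lemma convex_on_subgradient_exists:
  fixes f :: "'a::euclidean_space \<Rightarrow> real"
  assumes cvx: "convex_on S f" and x: "x \<in> interior S"
  shows "\<exists>g. \<forall>y\<in>S. f x + g \<bullet> (y - x) \<le> f y"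
proof -
  define T where "T = (+) (- (x, f x)) ` {(y, t). y \<in> S \<and> f y < t}"
  have "convex T" unfolding T_def by (intro convex_translation convex_strict_epigraph[OF cvx])
  moreover have "0 \<notin> T" by (auto simp: T_def zero_prod_def)
  ultimately obtain n where "n \<noteq> 0" and n: "\<forall>z\<in>T. 0 \<le> n \<bullet> z"
    using separating_hyperplane_set_0 by blast
  obtain g c where gc: "n = (g, c)" by (cases n)
  have sep: "0 \<le> g \<bullet> (y - x) + c * (t - f x)" if "y \<in> S" "f y < t" for y t
  proof -
    have "(y - x, t - f x) \<in> T" using that unfolding T_def by (auto intro!: image_eqI[of _ _ "(y, t)"])
    with n have "0 \<le> (g, c) \<bullet> (y - x, t - f x)" unfolding gc by blast
    then show ?thesis by (simp add: inner_Pair)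
  qed
  obtain e where "0 < e" and ball: "ball x e \<subseteq> S" using x by (auto simp: mem_interior)
  have "x \<in> S" using x interior_subset by blast
  then have "0 \<le> c" using sep[of x "f x + 1"] by simp
  moreover have "c \<noteq> 0"
  proof
    assume "c = 0"
    have "\<forall>y\<in>ball x e. 0 \<le> g \<bullet> (y - x)"
    proof
      fix y assume "y \<in> ball x e"
      with ball sep[of y "f y + 1"] \<open>c = 0\<close> show "0 \<le> g \<bullet> (y - x)" by auto
    qed
    with \<open>0 < e\<close> have "g = 0" by (rule inner_nonneg_on_ball_imp_eq_0)
    with \<open>c = 0\<close> \<open>n \<noteq> 0\<close> gc show False by (simp add: zero_prod_def)
  qed
  ultimately have "0 < c" by simp
  have "f x + (- g /\<^sub>R c) \<bullet> (y - x) \<le> f y" if "y \<in> S" for y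
  proof (rule field_le_epsilon)
    fix \<epsilon> :: real assume "0 < \<epsilon>"
    have "0 \<le> g \<bullet> (y - x) + c * (f y + \<epsilon> - f x)" using sep[OF that] \<open>0 < \<epsilon>\<close> by simp
    then show "f x + (- g /\<^sub>R c) \<bullet> (y - x) \<le> f y + \<epsilon>"
      using \<open>0 < c\<close> by (simp add: field_simps)
  qed
  then show ?thesis by blast
qed

lemma convex_on_slice_left:
  fixes g :: "'a::real_vector \<Rightarrow> 'b::real_vector \<Rightarrow> real"
  assumes cvx: "convex_on (A \<times> B) (\<lambda>(x, y). g x y)" and a: "a \<in> A"
  shows "convex_on B (g a)"
proof (rule convex_onI)
  fix t :: real and y z assume "0 < t" "t < 1" "y \<in> B" "z \<in> B"
  with convex_onD[OF cvx, of t "(a, y)" "(a, z)"] a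
  show "g a ((1 - t) *\<^sub>R y + t *\<^sub>R z) \<le> (1 - t) * g a y + t * g a z"
    by (simp add: scaleR_left_diff_distrib)
next
  show "convex B"
  proof (rule convexI)
    fix y z and u v :: real assume "y \<in> B" "z \<in> B" "0 \<le> u" "0 \<le> v" "u + v = 1"
    with cvx a have "u *\<^sub>R (a, y) + v *\<^sub>R (a, z) \<in> A \<times> B"
      unfolding convex_on_def convex_def by blast
    then show "u *\<^sub>R y + v *\<^sub>R z \<in> B" by simp
  qed
qed

lemma convex_on_slice_right:
  fixes g :: "'a::real_vector \<Rightarrow> 'b::real_vector \<Rightarrow> real"
  assumes cvx: "convex_on (A \<times> B) (\<lambda>(x, y). g x y)" and b: "b \<in> B"
  shows "convex_on A (\<lambda>x. g x b)"
proof -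
  have "convex_on (B \<times> A) (\<lambda>(y, x). g x y)"
  proof (rule convex_onI)
    fix t :: real and z w :: "'b \<times> 'a" assume "0 < t" "t < 1" "z \<in> B \<times> A" "w \<in> B \<times> A"
    with convex_onD[OF cvx, of t "prod.swap z" "prod.swap w"]
    show "(\<lambda>(y, x). g x y) ((1 - t) *\<^sub>R z + t *\<^sub>R w)
          \<le> (1 - t) * (\<lambda>(y, x). g x y) z + t * (\<lambda>(y, x). g x y) w"
      by (cases z, cases w) auto
  next
    have "convex (prod.swap ` (A \<times> B))"
      using cvx by (intro convex_linear_image) (auto simp: convex_on_def intro: linearI)
    then show "convex (B \<times> A)" by (simp add: product_swap)
  qed
  then show ?thesis using convex_on_slice_left b by fastforce
qed

text \<open>A convex function on the closed square need not have a subgradient at boundary points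
  (like \<open>-sqrt x\<close> at \<open>0\<close>). But a \<open>[0,1]\<close>-valued variable with mean \<open>0\<close> or \<open>1\<close> is almost surely
  constant, so for Jensen's inequality an affine minorant on the smallest face of \<open>[0,1]\<close>
  containing the mean suffices.\<close>
definition unit_face :: "real \<Rightarrow> real set" where
  "unit_face a = (if a = 0 \<or> a = 1 then {a} else {0..1})"

lemma affine_minorant_on_unit_faces:
  fixes Dv :: "real \<Rightarrow> real \<Rightarrow> real"
  assumes cvx: "convex_on ({0..1} \<times> {0..1}) (\<lambda>(x, y). Dv x y)"
    and a: "a \<in> {0..1}" and b: "b \<in> {0..1}"
  shows "\<exists>c1 c2. \<forall>x\<in>unit_face a. \<forall>y\<in>unit_face b. Dv a b + c1 * (x - a) + c2 * (y - b) \<le> Dv x y"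
proof (cases "a = 0 \<or> a = 1")
  case a_face: True
  show ?thesis
  proof (cases "b = 0 \<or> b = 1")
    case True
    with a_face show ?thesis by (intro exI[of _ 0]) (auto simp: unit_face_def)
  next
    case False
    with b have "b \<in> interior {0..1}" by auto
    from convex_on_subgradient_exists[OF convex_on_slice_left[OF cvx a] this] obtain c
      where "\<forall>y\<in>{0..1}. Dv a b + c * (y - b) \<le> Dv a y" by auto
    with a_face show ?thesis by (intro exI[of _ 0] exI[of _ c]) (auto simp: unit_face_def)
  qed
next
  case a_inner: False
  with a have a': "a \<in> interior {0..1}" by auto
  show ?thesis
  proof (cases "b = 0 \<or> b = 1")
    case True
    from convex_on_subgradient_exists[OF convex_on_slice_right[OF cvx b] a'] obtain c
      where "\<forall>x\<in>{0..1}. Dv a b + c * (x - a) \<le> Dv x b" by auto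
    with True show ?thesis by (intro exI[of _ c] exI[of _ 0]) (auto simp: unit_face_def)
  next
    case False
    with a' b have "(a, b) \<in> interior ({0..1} \<times> {0..1})" by (auto simp: interior_Times)
    from convex_on_subgradient_exists[OF cvx this] obtain g
      where "\<forall>z\<in>{0..1} \<times> {0..1}. Dv a b + g \<bullet> (z - (a, b)) \<le> (\<lambda>(x, y). Dv x y) z" by auto
    then show ?thesis
      by (rule_tac exI[of _ "fst g"], rule_tac exI[of _ "snd g"])
        (use a_inner False in \<open>auto simp: inner_prod_def unit_face_def add.assoc\<close>)
  qed
qed

lemma AE_in_unit_face:
  assumes Q: "prob_space Q" and v: "v \<in> borel_measurable Q" and v01: "\<forall>x\<in>space Q. v x \<in> {0..1}"
  shows "AE x in Q. v x \<in> unit_face (\<integral>x. v x \<partial>Q)"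
proof -
  interpret prob_space Q by (rule Q)
  have int_v: "integrable Q v" using v v01 by (intro integrable_const_bound[where B=1]) auto
  consider "(\<integral>x. v x \<partial>Q) = 0" | "(\<integral>x. v x \<partial>Q) = 1" | "(\<integral>x. v x \<partial>Q) \<notin> {0, 1}" by auto
  then show ?thesis
  proof cases
    case 1
    then have "AE x in Q. v x = 0" using integral_nonneg_eq_0_iff_AE[OF int_v] v01 by auto
    then show ?thesis by eventually_elim (simp add: 1 unit_face_def)
  next
    case 2
    then have "(\<integral>x. 1 - v x \<partial>Q) = 0" using int_v by (simp add: prob_space)
    then have "AE x in Q. 1 - v x = 0"
      using integral_nonneg_eq_0_iff_AE[of Q "\<lambda>x. 1 - v x"] int_v v01 by auto
    then show ?thesis by eventually_elim (simp add: 2 unit_face_def)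
  qed (use v01 in \<open>auto simp: unit_face_def intro!: AE_I2\<close>)
qed

lemma (in prob_space) exp_Jensen_bounded:
  assumes l: "l \<in> borel_measurable M" and bound: "\<forall>x\<in>space M. \<bar>l x\<bar> \<le> B" and "0 \<le> t"
  shows "ennreal (exp (t * expectation l)) \<le> (\<integral>\<^sup>+ x. ennreal (exp (t * l x)) \<partial>M)"
proof -
  have int_l: "integrable M l" using l bound by (intro integrable_const_bound) auto
  have int_exp_l: "integrable M (\<lambda>x. exp (t * l x))"
  proof (rule integrable_const_bound)
    show "AE x in M. norm (exp (t * l x)) \<le> exp (t * B)"
      using bound \<open>0 \<le> t\<close> by (auto intro!: AE_I2 mult_left_mono simp: abs_le_iff)
  qed (use l in measurable)
  have "exp (t * expectation l) \<le> expectation (\<lambda>x. exp (t * l x))"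
    using jensens_inequality[where I=UNIV and q="\<lambda>x. exp (t * x)", OF int_l] int_exp_l
      convex_on_exp[OF \<open>0 \<le> t\<close>] by simp
  with int_exp_l show ?thesis by (simp add: nn_integral_eq_integral ennreal_leI)
qed

lemma exp_Jensen_convex_on_unit_square:
  fixes Dv :: "real \<Rightarrow> real \<Rightarrow> real" and t :: real
  assumes Q: "prob_space Q"
    and u: "u \<in> borel_measurable Q" and u01: "\<forall>x\<in>space Q. u x \<in> {0..1}"
    and v: "v \<in> borel_measurable Q" and v01: "\<forall>x\<in>space Q. v x \<in> {0..1}"
    and cvx: "convex_on ({0..1} \<times> {0..1}) (\<lambda>(x, y). Dv x y)" and "0 \<le> t"
  shows "ennreal (exp (t * Dv (\<integral>x. u x \<partial>Q) (\<integral>x. v x \<partial>Q)))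
           \<le> (\<integral>\<^sup>+ x. ennreal (exp (t * Dv (u x) (v x))) \<partial>Q)"
proof -
  interpret prob_space Q by (rule Q)
  define a where "a = (\<integral>x. u x \<partial>Q)"
  define b where "b = (\<integral>x. v x \<partial>Q)"
  have int_u: "integrable Q u" using u u01 by (intro integrable_const_bound[where B=1]) auto
  have int_v: "integrable Q v" using v v01 by (intro integrable_const_bound[where B=1]) auto
  have a01: "a \<in> {0..1}" and b01: "b \<in> {0..1}" unfolding a_def b_def using u01 int_u v01 int_v
    by (auto intro!: integral_nonneg_AE integral_le_const)
  then obtain c1 c2 where minorant:
    "\<forall>x\<in>unit_face a. \<forall>y\<in>unit_face b. Dv a b + c1 * (x - a) + c2 * (y - b) \<le> Dv x y"
    using affine_minorant_on_unit_faces[OF cvx] by blast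
  define l where "l x = Dv a b + c1 * (u x - a) + c2 * (v x - b)" for x
  have "\<bar>l x\<bar> \<le> \<bar>Dv a b\<bar> + \<bar>c1\<bar> + \<bar>c2\<bar>" if "x \<in> space Q" for x
  proof -
    have "\<bar>u x - a\<bar> \<le> 1" "\<bar>v x - b\<bar> \<le> 1" using u01 v01 that a01 b01 by auto
    then have "\<bar>c1 * (u x - a)\<bar> \<le> \<bar>c1\<bar>" "\<bar>c2 * (v x - b)\<bar> \<le> \<bar>c2\<bar>"
      by (auto simp: abs_mult intro: mult_left_le)
    then show ?thesis unfolding l_def by linarith
  qed
  moreover have "l \<in> borel_measurable Q" unfolding l_def using u v by measurable
  moreover have "expectation l = Dv a b"
    unfolding l_def using int_u int_v by (simp add: a_def b_def prob_space)
  ultimately have "ennreal (exp (t * Dv a b)) \<le> (\<integral>\<^sup>+ x. ennreal (exp (t * l x)) \<partial>Q)"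
    using exp_Jensen_bounded[of l, OF _ _ \<open>0 \<le> t\<close>] by auto
  also have "\<dots> \<le> (\<integral>\<^sup>+ x. ennreal (exp (t * Dv (u x) (v x))) \<partial>Q)"
    using AE_in_unit_face[OF Q u u01] AE_in_unit_face[OF Q v v01]
  proof (intro nn_integral_mono_AE, eventually_elim)
    case (elim x)
    with minorant \<open>0 \<le> t\<close> show ?case
      by (auto simp: l_def a_def b_def intro!: ennreal_leI mult_left_mono)
  qed
  finally show ?thesis by (simp add: a_def b_def)
qed

lemma continuous_on_unit_square_piece:
  fixes Dv :: "real \<Rightarrow> real \<Rightarrow> real"
  assumes cvx: "convex_on ({0..1} \<times> {0..1}) (\<lambda>(x, y). Dv x y)"
    and K: "K \<in> {{0}, {1}, {0<..<1}}" and L: "L \<in> {{0}, {1}, {0<..<1}}"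
  shows "continuous_on (K \<times> L) (\<lambda>z. Dv (fst z) (snd z))"
proof -
  have open_slice: "continuous_on {0<..<1} g" if "convex_on {0..1} g" for g :: "real \<Rightarrow> real"
  proof (rule convex_on_continuous)
    show "convex_on {0<..<1} g" by (rule convex_on_subset[OF that]) auto
  qed simp
  consider "K = {0<..<1}" "L = {0<..<1}" | a where "a \<in> {0..1}" "K = {a}" "L = {0<..<1}"
    | b where "b \<in> {0..1}" "K = {0<..<1}" "L = {b}" | a b where "K = {a}" "L = {b}"
    using K L by auto
  then show ?thesis
  proof cases
    case 1
    have "convex_on ({0<..<1} \<times> {0<..<1}) (\<lambda>(x, y). Dv x y)"
      by (rule convex_on_subset[OF cvx]) (auto intro: convex_Times)
    then show ?thesis unfolding 1
      by (intro convex_on_continuous) (auto simp: open_Times case_prod_unfold)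
  next
    case (2 a)
    have "continuous_on {0<..<1} (Dv a)" by (rule open_slice[OF convex_on_slice_left[OF cvx 2(1)]])
    then have "continuous_on ({a} \<times> {0<..<1}) (\<lambda>z. Dv a (snd z))"
      by (rule continuous_on_compose2) (auto intro: continuous_intros)
    then show ?thesis unfolding 2 by (rule continuous_on_eq) auto
  next
    case (3 b)
    have "continuous_on {0<..<1} (\<lambda>x. Dv x b)" by (rule open_slice[OF convex_on_slice_right[OF cvx 3(1)]])
    then have "continuous_on ({0<..<1} \<times> {b}) (\<lambda>z. Dv (fst z) b)"
      by (rule continuous_on_compose2) (auto intro: continuous_intros)
    then show ?thesis unfolding 3 by (rule continuous_on_eq) auto
  qed simp
qed

text \<open>A convex function may jump at the boundary of its domain, but it is continuous on each of
  the nine relatively open faces of the square (interior, open edges, corners).\<close>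
lemma borel_measurable_convex_on_unit_square:
  fixes Dv :: "real \<Rightarrow> real \<Rightarrow> real"
  assumes cvx: "convex_on ({0..1} \<times> {0..1}) (\<lambda>(x, y). Dv x y)"
    and u: "u \<in> borel_measurable N" and u01: "\<forall>x\<in>space N. u x \<in> {0..1}"
    and v: "v \<in> borel_measurable N" and v01: "\<forall>x\<in>space N. v x \<in> {0..1}"
  shows "(\<lambda>x. Dv (u x) (v x)) \<in> borel_measurable N"
proof -
  define pieces :: "real set set" where "pieces = {{0}, {1}, {0<..<1}}"
  define C where "C = insert (- ({0..1} \<times> {0..1})) ((\<lambda>(K, L). K \<times> L) ` (pieces \<times> pieces))"
  define g where "g z = (if z \<in> {0..1} \<times> {0..1} then Dv (fst z) (snd z) else 0)" for z :: "real \<times> real"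
  have "g \<in> borel_measurable borel"
  proof (rule measurable_piecewise_restrict[of C])
    show "countable C" by (simp add: C_def pieces_def)
    have "K \<times> L \<in> sets borel" if "K \<in> pieces" "L \<in> pieces" for K L
    proof -
      have "K \<times> L \<in> sets (borel \<Otimes>\<^sub>M borel)" using that by (intro pair_measureI) (auto simp: pieces_def)
      then show ?thesis unfolding borel_prod .
    qed
    moreover have "open (- ({0..1} \<times> {0..1}) :: (real \<times> real) set)"
      by (intro open_Compl closed_Times closed_atLeastAtMost)
    ultimately show "\<Omega> \<inter> space borel \<in> sets borel" if "\<Omega> \<in> C" for \<Omega>
      using that by (auto simp: C_def)
    have "z \<in> \<Union>C" if "z \<in> {0..1} \<times> {0..1}" for z
    proof -
      have "fst z \<in> \<Union>pieces" "snd z \<in> \<Union>pieces" using that by (auto simp: pieces_def mem_Times_iff)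
      then show ?thesis by (force simp: C_def mem_Times_iff)
    qed
    then show "space borel \<subseteq> \<Union>C" by (auto simp: C_def)
    show "g \<in> borel_measurable (restrict_space borel \<Omega>)" if "\<Omega> \<in> C" for \<Omega>
    proof (rule borel_measurable_continuous_on_restrict)
      from that consider "\<Omega> = - ({0..1} \<times> {0..1})" | K L where "K \<in> pieces" "L \<in> pieces" "\<Omega> = K \<times> L"
        by (auto simp: C_def)
      then show "continuous_on \<Omega> g"
      proof cases
        case 1
        show ?thesis by (rule continuous_on_eq[of _ "\<lambda>_. 0"]) (auto simp: 1 g_def)
      next
        case 2
        then have "continuous_on \<Omega> (\<lambda>z. Dv (fst z) (snd z))"
          using continuous_on_unit_square_piece[OF cvx] by (auto simp: pieces_def)
        then show ?thesis by (rule continuous_on_eq) (use 2 in \<open>auto simp: g_def pieces_def\<close>)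
      qed
    qed
  qed
  then have "(\<lambda>x. g (u x, v x)) \<in> borel_measurable N"
    using u v by (intro measurable_compose[of _ N "borel \<Otimes>\<^sub>M borel" g]) (auto simp: borel_prod)
  then show ?thesis by (rule measurable_cong[THEN iffD1, rotated]) (use u01 v01 in \<open>simp add: g_def\<close>)
qed

lemma nn_integral_density_eq_of_symmetrization:
  fixes \<mu> HM :: "'a measure" and c :: "'a \<Rightarrow> 'a" and p q :: "'a \<Rightarrow> real" and h :: "'a \<Rightarrow> ennreal"
  assumes c: "c \<in> measurable HM HM" and \<mu>_sets: "sets \<mu> = sets HM" and \<mu>_inv: "distr \<mu> HM c = \<mu>"
    and p: "p \<in> borel_measurable HM" and p_nonneg: "\<forall>f\<in>space HM. 0 \<le> p f"
    and q: "q \<in> borel_measurable HM" and q_nonneg: "\<forall>f\<in>space HM. 0 \<le> q f"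
    and pq: "\<forall>f\<in>space HM. q f + q (c f) = p f + p (c f)"
    and h: "h \<in> borel_measurable HM" and h_inv: "\<forall>f\<in>space HM. h (c f) = h f"
  shows "(\<integral>\<^sup>+ f. h f \<partial>density \<mu> q) = (\<integral>\<^sup>+ f. h f \<partial>density \<mu> p)"
proof -
  have space_\<mu>: "space \<mu> = space HM" using \<mu>_sets by (rule sets_eq_imp_space_eq)
  note meas_\<mu> = measurable_cong_sets[OF \<mu>_sets refl]
  have double: "(\<integral>\<^sup>+ f. r f * h f \<partial>\<mu>) + (\<integral>\<^sup>+ f. r f * h f \<partial>\<mu>)
      = (\<integral>\<^sup>+ f. ennreal (r f + r (c f)) * h f \<partial>\<mu>)"
    if r: "r \<in> borel_measurable HM" and r_nonneg: "\<forall>f\<in>space HM. 0 \<le> r f" for r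
  proof -
    have r_c: "(\<lambda>f. r (c f)) \<in> borel_measurable HM" using measurable_comp[OF c r] by (simp add: o_def)
    have "(\<integral>\<^sup>+ f. r f * h f \<partial>\<mu>) = (\<integral>\<^sup>+ f. r f * h f \<partial>distr \<mu> HM c)"
      by (simp add: \<mu>_inv)
    also have "\<dots> = (\<integral>\<^sup>+ f. r (c f) * h (c f) \<partial>\<mu>)"
      using c r h by (intro nn_integral_distr) (simp_all add: meas_\<mu>)
    also have "\<dots> = (\<integral>\<^sup>+ f. r (c f) * h f \<partial>\<mu>)"
      using h_inv by (intro nn_integral_cong) (simp add: space_\<mu>)
    finally have "(\<integral>\<^sup>+ f. r f * h f \<partial>\<mu>) + (\<integral>\<^sup>+ f. r f * h f \<partial>\<mu>)
        = (\<integral>\<^sup>+ f. r f * h f + r (c f) * h f \<partial>\<mu>)"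
      using r r_c h by (simp add: nn_integral_add meas_\<mu>)
    also have "\<dots> = (\<integral>\<^sup>+ f. ennreal (r f + r (c f)) * h f \<partial>\<mu>)"
      using r_nonneg c by (intro nn_integral_cong)
        (simp add: space_\<mu> ennreal_plus distrib_right measurable_space)
    finally show ?thesis .
  qed
  have "(\<integral>\<^sup>+ f. q f * h f \<partial>\<mu>) + (\<integral>\<^sup>+ f. q f * h f \<partial>\<mu>)
      = (\<integral>\<^sup>+ f. p f * h f \<partial>\<mu>) + (\<integral>\<^sup>+ f. p f * h f \<partial>\<mu>)"
    unfolding double[OF q q_nonneg] double[OF p p_nonneg]
    using pq by (intro nn_integral_cong) (simp add: space_\<mu>)
  then have "(\<integral>\<^sup>+ f. q f * h f \<partial>\<mu>) = (\<integral>\<^sup>+ f. p f * h f \<partial>\<mu>)"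
    by (simp flip: mult_2 add: ennreal_mult_cancel_left)
  with p q h show ?thesis by (simp add: nn_integral_density meas_\<mu>)
qed

lemma (in prob_space) prob_Markov_nn_integral:
  assumes F: "F \<in> borel_measurable M" and fin: "(\<integral>\<^sup>+ x. F x \<partial>M) \<noteq> \<top>" and "0 < \<delta>"
  shows "1 - \<delta> \<le> prob {x \<in> space M. ennreal \<delta> * F x \<le> (\<integral>\<^sup>+ x. F x \<partial>M)}"
proof -
  define E where "E = (\<integral>\<^sup>+ x. F x \<partial>M)"
  define B where "B = {x \<in> space M. E < ennreal \<delta> * F x}"
  have B: "B \<in> events" unfolding B_def using F by measurable
  have "emeasure M B \<le> \<delta>"
  proof (cases "E = 0")
    case True
    then have "AE x in M. F x = 0" using nn_integral_0_iff_AE[OF F] by (simp add: E_def)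
    then have "AE x in M. x \<notin> B" by (auto simp: B_def True)
    moreover have "{x \<in> space M. \<not> x \<notin> B} = B" using sets.sets_into_space[OF B] by auto
    ultimately show ?thesis using AE_iff_measurable[OF B] by simp
  next
    case False
    have "E * emeasure M B = (\<integral>\<^sup>+ x. E * indicator B x \<partial>M)"
      using B by (simp add: nn_integral_cmult_indicator)
    also have "\<dots> \<le> (\<integral>\<^sup>+ x. ennreal \<delta> * F x \<partial>M)"
      by (intro nn_integral_mono) (auto simp: B_def indicator_def less_imp_le)
    also have "\<dots> = E * ennreal \<delta>" unfolding E_def using F by (simp add: nn_integral_cmult mult.commute)
    finally show ?thesis using False fin by (simp add: E_def ennreal_mult_le_mult_iff)
  qed
  then have "prob B \<le> \<delta>" using \<open>0 < \<delta>\<close> by (simp add: emeasure_eq_measure)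
  moreover have "{x \<in> space M. ennreal \<delta> * F x \<le> E} = space M - B" by (auto simp: B_def not_less)
  ultimately show ?thesis using prob_compl[OF B] by (simp add: E_def)
qed

lemma (in prob_space) exp_moment_bound_high_probability:
  assumes F: "F \<in> borel_measurable M" and "0 < \<delta>" and "0 < t"
  shows "\<exists>A\<in>events. 1 - \<delta> \<le> prob A \<and>
           (\<forall>x\<in>A. \<forall>d. ennreal (exp (t * d)) \<le> F x \<longrightarrow>
              (\<integral>\<^sup>+ x. F x \<partial>M) = \<top> \<or> d \<le> 1 / t * ln (1 / \<delta> * enn2real (\<integral>\<^sup>+ x. F x \<partial>M)))"
proof (cases "(\<integral>\<^sup>+ x. F x \<partial>M) = \<top>")
  case True
  then show ?thesis using \<open>0 < \<delta>\<close> by (intro bexI[of _ "space M"]) (auto simp: prob_space)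
next
  case False
  define E where "E = (\<integral>\<^sup>+ x. F x \<partial>M)"
  define A where "A = {x \<in> space M. ennreal \<delta> * F x \<le> E}"
  have "d \<le> 1 / t * ln (1 / \<delta> * enn2real E)" if "x \<in> A" "ennreal (exp (t * d)) \<le> F x" for x d
  proof -
    have "ennreal (\<delta> * exp (t * d)) \<le> ennreal \<delta> * F x"
      using that(2) \<open>0 < \<delta>\<close> by (simp add: ennreal_mult' mult_left_mono)
    also have "\<dots> \<le> E" using that(1) by (simp add: A_def)
    finally have "enn2real (ennreal (\<delta> * exp (t * d))) \<le> enn2real E"
      using False by (intro enn2real_mono) (auto simp: E_def top.not_eq_extremum)
    then have "\<delta> * exp (t * d) \<le> enn2real E" using \<open>0 < \<delta>\<close> by simp
    then have "exp (t * d) \<le> 1 / \<delta> * enn2real E" using \<open>0 < \<delta>\<close> by (simp add: field_simps)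
    then have "t * d \<le> ln (1 / \<delta> * enn2real E)"
      by (metis exp_gt_zero exp_le_cancel_iff exp_ln order_less_le_trans)
    then show ?thesis using \<open>0 < t\<close> by (simp add: field_simps)
  qed
  moreover have "A \<in> events" unfolding A_def using F by measurable
  moreover have "1 - \<delta> \<le> prob A"
    unfolding A_def E_def using prob_Markov_nn_integral[OF F False \<open>0 < \<delta>\<close>] .
  ultimately show ?thesis by (auto simp: E_def)
qed

lemma lin_loss_uminus: "lin_loss (- a) y = 1 - lin_loss a y"
  by (simp add: lin_loss_def field_simps)

lemma emp_risk_uminus: "0 < m \<Longrightarrow> emp_risk m S (\<lambda>x. - f x) = 1 - emp_risk m S f"
  by (simp add: emp_risk_def lin_loss_uminus sum_subtractf diff_divide_distrib)

locale voter_setting = D: prob_space D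
  for D :: "('x \<times> real) measure" +
  fixes X :: "'x measure" and HM :: "('x \<Rightarrow> real) measure"
  assumes D_sets: "sets D = sets (X \<Otimes>\<^sub>M count_space {-1, 1})"
    and H_voters: "\<forall>f\<in>space HM. \<forall>x\<in>space X. f x \<in> {-1..1}"
    and H_eval_meas: "(\<lambda>(f, x). f x) \<in> borel_measurable (HM \<Otimes>\<^sub>M X)"
begin

abbreviation sample_space :: "nat \<Rightarrow> (nat \<Rightarrow> 'x \<times> real) measure" where
  "sample_space m \<equiv> PiM {..<m} (\<lambda>_. D)"

lemma space_D: "space D = space X \<times> {-1, 1}"
  using sets_eq_imp_space_eq[OF D_sets] by (simp add: space_pair_measure)

lemma lin_loss_in_unit:
  assumes "f \<in> space HM" "z \<in> space D"
  shows "lin_loss (f (fst z)) (snd z) \<in> {0..1}"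
  using assms H_voters by (auto simp: space_D lin_loss_def)

lemma measurable_lin_loss:
  assumes g: "g \<in> measurable N HM" and h: "h \<in> measurable N D"
  shows "(\<lambda>w. lin_loss (g w (fst (h w))) (snd (h w))) \<in> borel_measurable N"
proof -
  have "snd \<in> measurable (X \<Otimes>\<^sub>M count_space {-1, 1}) (count_space {-1, 1::real})" by simp
  then have "snd \<in> borel_measurable (X \<Otimes>\<^sub>M count_space {-1, 1::real})"
    by (rule measurable_compose[where g = "\<lambda>y. y"]) simp
  moreover have "fst \<in> measurable (X \<Otimes>\<^sub>M count_space {-1, 1::real}) X" by simp
  ultimately have "snd \<in> borel_measurable D" "fst \<in> measurable D X"
    by (simp_all add: measurable_cong_sets[OF D_sets refl])
  then have "(\<lambda>w. fst (h w)) \<in> measurable N X" "(\<lambda>w. snd (h w)) \<in> borel_measurable N"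
    using measurable_compose[OF h] by auto
  then have "(\<lambda>w. g w (fst (h w))) \<in> borel_measurable N" "(\<lambda>w. snd (h w)) \<in> borel_measurable N"
    using measurable_compose[OF measurable_Pair[OF g] H_eval_meas] by auto
  then show ?thesis unfolding lin_loss_def by measurable
qed

lemma true_risk_measurable: "true_risk D \<in> borel_measurable HM"
proof -
  have "(\<lambda>(f, z). lin_loss (f (fst z)) (snd z)) \<in> borel_measurable (HM \<Otimes>\<^sub>M D)"
    using measurable_lin_loss[OF measurable_fst measurable_snd] by (simp add: case_prod_unfold)
  then show ?thesis unfolding true_risk_def by (rule D.borel_measurable_lebesgue_integral)
qed

lemma integrable_lin_loss:
  assumes "f \<in> space HM" shows "integrable D (\<lambda>z. lin_loss (f (fst z)) (snd z))"
  using assms lin_loss_in_unit measurable_lin_loss[OF measurable_const measurable_ident_sets]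
  by (intro D.integrable_const_bound[where B=1]) auto

lemma true_risk_in_unit: "f \<in> space HM \<Longrightarrow> true_risk D f \<in> {0..1}"
  using lin_loss_in_unit integrable_lin_loss
  unfolding true_risk_def by (auto intro!: integral_nonneg_AE D.integral_le_const)

lemma true_risk_uminus: "f \<in> space HM \<Longrightarrow> true_risk D (\<lambda>x. - f x) = 1 - true_risk D f"
  using integrable_lin_loss by (simp add: true_risk_def lin_loss_uminus D.prob_space)

lemma emp_risk_measurable:
  "(\<lambda>w. emp_risk m (fst w) (snd w)) \<in> borel_measurable (sample_space m \<Otimes>\<^sub>M HM)"
proof -
  have "(\<lambda>w. fst w i) \<in> measurable (sample_space m \<Otimes>\<^sub>M HM) D" if "i < m" for i
    using measurable_compose[OF measurable_fst measurable_component_singleton] that by auto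
  then show ?thesis
    unfolding emp_risk_def using measurable_lin_loss[OF measurable_snd] by measurable
qed

lemma emp_risk_in_unit:
  assumes S: "S \<in> space (sample_space m)" and f: "f \<in> space HM"
  shows "emp_risk m S f \<in> {0..1}"
proof -
  have "lin_loss (f (fst (S i))) (snd (S i)) \<in> {0..1}" if "i < m" for i
    using S that by (intro lin_loss_in_unit[OF f]) (auto simp: space_PiM)
  then have "0 \<le> (\<Sum>i<m. lin_loss (f (fst (S i))) (snd (S i)))"
    and "(\<Sum>i<m. lin_loss (f (fst (S i))) (snd (S i))) \<le> of_nat (card {..<m}) * 1"
    by (intro sum_nonneg sum_bounded_above; simp)+
  then show ?thesis by (simp add: emp_risk_def divide_le_eq)
qed

lemma prior_exp_moment_measurable:
  fixes Dv :: "real \<Rightarrow> real \<Rightarrow> real"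
  assumes P: "sigma_finite_measure P" and P_sets: "sets P = sets HM"
    and cvx: "convex_on ({0..1} \<times> {0..1}) (\<lambda>(x, y). Dv x y)"
  shows "(\<lambda>S. \<integral>\<^sup>+ f. ennreal (exp (t * Dv (emp_risk m S f) (true_risk D f))) \<partial>P)
           \<in> borel_measurable (sample_space m)"
proof -
  have "(\<lambda>w. Dv (emp_risk m (fst w) (snd w)) (true_risk D (snd w))) \<in> borel_measurable (sample_space m \<Otimes>\<^sub>M HM)"
    using emp_risk_measurable measurable_compose[OF measurable_snd true_risk_measurable]
      emp_risk_in_unit true_risk_in_unit
    by (intro borel_measurable_convex_on_unit_square[OF cvx]) (auto simp: space_pair_measure)
  then have "(\<lambda>(S, f). ennreal (exp (t * Dv (emp_risk m S f) (true_risk D f))))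
      \<in> borel_measurable (sample_space m \<Otimes>\<^sub>M P)"
    by (simp add: case_prod_unfold measurable_cong_sets[OF sets_pair_measure_cong[OF refl P_sets] refl])
  then show ?thesis by (rule sigma_finite_measure.borel_measurable_nn_integral[OF P])
qed

lemma exp_Gibbs_risks_le_prior_exp_moment:
  fixes \<mu> :: "('x \<Rightarrow> real) measure" and p q :: "('x \<Rightarrow> real) \<Rightarrow> real" and Dv :: "real \<Rightarrow> real \<Rightarrow> real"
  assumes c_meas: "(\<lambda>f x. - f x) \<in> measurable HM HM"
    and \<mu>_sets: "sets \<mu> = sets HM" and \<mu>_inv: "distr \<mu> HM (\<lambda>f x. - f x) = \<mu>"
    and p: "p \<in> borel_measurable HM" and p_nonneg: "\<forall>f\<in>space HM. 0 \<le> p f"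
    and q: "q \<in> borel_measurable HM" and q_nonneg: "\<forall>f\<in>space HM. 0 \<le> q f"
    and Q: "prob_space (density \<mu> q)" and aligned: "aligned (space HM) q p"
    and cvx: "convex_on ({0..1} \<times> {0..1}) (\<lambda>(x, y). Dv x y)"
    and sym: "\<forall>x\<in>{0..1}. \<forall>y\<in>{0..1}. Dv x y = Dv (1 - x) (1 - y)"
    and "0 < m" and "0 \<le> t" and S: "S \<in> space (sample_space m)"
  shows "ennreal (exp (t * Dv (gibbs_risk (density \<mu> q) (emp_risk m S))
                              (gibbs_risk (density \<mu> q) (true_risk D))))
         \<le> (\<integral>\<^sup>+ f. ennreal (exp (t * Dv (emp_risk m S f) (true_risk D f))) \<partial>density \<mu> p)"
proof -
  define h where "h f = ennreal (exp (t * Dv (emp_risk m S f) (true_risk D f)))" for f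
  have sets_Q: "sets (density \<mu> q) = sets HM" using \<mu>_sets by simp
  note meas_Q = measurable_cong_sets[OF sets_Q refl]
  have space_\<mu>: "space \<mu> = space HM" using \<mu>_sets by (rule sets_eq_imp_space_eq)
  have emp: "emp_risk m S \<in> borel_measurable HM"
    using measurable_compose[OF measurable_Pair1'[OF S] emp_risk_measurable] by simp
  have "ennreal (exp (t * Dv (gibbs_risk (density \<mu> q) (emp_risk m S))
                            (gibbs_risk (density \<mu> q) (true_risk D))))
        \<le> (\<integral>\<^sup>+ f. h f \<partial>density \<mu> q)"
    unfolding gibbs_risk_def h_def
    using emp true_risk_measurable emp_risk_in_unit[OF S] true_risk_in_unit
    by (intro exp_Jensen_convex_on_unit_square[OF Q _ _ _ _ cvx \<open>0 \<le> t\<close>]) (simp_all add: meas_Q space_\<mu>)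
  also have "\<dots> = (\<integral>\<^sup>+ f. h f \<partial>density \<mu> p)"
  proof (rule nn_integral_density_eq_of_symmetrization[OF c_meas \<mu>_sets \<mu>_inv p p_nonneg q q_nonneg])
    show "\<forall>f\<in>space HM. q f + q (\<lambda>x. - f x) = p f + p (\<lambda>x. - f x)"
      using aligned by (simp add: aligned_def)
    have [measurable]: "(\<lambda>f. Dv (emp_risk m S f) (true_risk D f)) \<in> borel_measurable HM"
      using emp true_risk_measurable emp_risk_in_unit[OF S] true_risk_in_unit
      by (intro borel_measurable_convex_on_unit_square[OF cvx]) auto
    then show "h \<in> borel_measurable HM" unfolding h_def by measurable
    show "\<forall>f\<in>space HM. h (\<lambda>x. - f x) = h f"
    proof
      fix f assume f: "f \<in> space HM"
      have "Dv (1 - emp_risk m S f) (1 - true_risk D f) = Dv (emp_risk m S f) (true_risk D f)"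
        using sym emp_risk_in_unit[OF S f] true_risk_in_unit[OF f] by metis
      then show "h (\<lambda>x. - f x) = h f"
        by (simp add: h_def emp_risk_uminus[OF \<open>0 < m\<close>] true_risk_uminus[OF f])
    qed
  qed
  finally show ?thesis by (simp add: h_def)
qed

end

theorem mainTheorem13:
  fixes X :: "'x measure"
    and D :: "('x \<times> real) measure"
    and HM :: "('x \<Rightarrow> real) measure"
    and \<mu> :: "('x \<Rightarrow> real) measure"
    and p :: "('x \<Rightarrow> real) \<Rightarrow> real"
    and Dv :: "real \<Rightarrow> real \<Rightarrow> real"
    and m :: nat and m' :: real and \<delta> :: real
  assumes D_prob: "prob_space D"
    and D_sets: "sets D = sets (X \<Otimes>\<^sub>M count_space {-1, 1})"
    and H_voters: "\<forall>f\<in>space HM. \<forall>x\<in>space X. f x \<in> {-1..1}"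
    and H_eval_meas: "(\<lambda>(f, x). f x) \<in> borel_measurable (HM \<Otimes>\<^sub>M X)"
    and H_selfcompl: "\<forall>f\<in>space HM. (\<lambda>x. - f x) \<in> space HM"
    and c_meas: "(\<lambda>f x. - f x) \<in> measurable HM HM"
    and \<mu>_sets: "sets \<mu> = sets HM"
    and \<mu>_inv: "distr \<mu> HM (\<lambda>f x. - f x) = \<mu>"
    and p_meas: "p \<in> borel_measurable HM"
    and p_nonneg: "\<forall>f\<in>space HM. 0 \<le> p f"
    and P_prob: "prob_space (density \<mu> p)"
    and Dv_convex: "convex_on ({0..1} \<times> {0..1}) (\<lambda>(q, r). Dv q r)"
    and Dv_sym: "\<forall>q\<in>{0..1}. \<forall>r\<in>{0..1}. Dv q r = Dv (1 - q) (1 - r)"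
    and m_pos: "0 < m"
    and m'_pos: "0 < m'"
    and \<delta>_pos: "0 < \<delta>" and \<delta>_le1: "\<delta> \<le> 1"
  shows "\<exists>A\<in>sets (PiM {..<m} (\<lambda>_. D)).
           measure (PiM {..<m} (\<lambda>_. D)) A \<ge> 1 - \<delta> \<and>
           (\<forall>S\<in>A. \<forall>q. q \<in> borel_measurable HM \<and> (\<forall>f\<in>space HM. 0 \<le> q f)
                   \<and> prob_space (density \<mu> q) \<and> aligned (space HM) q p \<longrightarrow>
              (let E = (\<integral>\<^sup>+ S'. (\<integral>\<^sup>+ f. ennreal (exp (m' * Dv (emp_risk m S' f) (true_risk D f)))
                                  \<partial>(density \<mu> p)) \<partial>(PiM {..<m} (\<lambda>_. D)))
               in E = \<top> \<or>
                  Dv (gibbs_risk (density \<mu> q) (emp_risk m S))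
                     (gibbs_risk (density \<mu> q) (true_risk D))
                  \<le> (1 / m') * ln ((1 / \<delta>) * enn2real E)))"
proof -
  interpret voter_setting D X HM
    using D_prob D_sets H_voters H_eval_meas by (simp add: voter_setting_def voter_setting_axioms_def)
  let ?M = "PiM {..<m} (\<lambda>_. D)"
  interpret M: prob_space ?M by (intro prob_space_PiM D_prob)
  define F where "F S = (\<integral>\<^sup>+ f. ennreal (exp (m' * Dv (emp_risk m S f) (true_risk D f))) \<partial>density \<mu> p)" for S
  have "F \<in> borel_measurable ?M"
    unfolding F_def using P_prob \<mu>_sets
    by (intro prior_exp_moment_measurable[OF _ _ Dv_convex]) (simp_all add: prob_space_imp_sigma_finite)
  then obtain A where A: "A \<in> M.events" "1 - \<delta> \<le> M.prob A"
    and bound: "\<forall>S\<in>A. \<forall>d. ennreal (exp (m' * d)) \<le> F S \<longrightarrow>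
       (\<integral>\<^sup>+ S. F S \<partial>?M) = \<top> \<or> d \<le> 1 / m' * ln (1 / \<delta> * enn2real (\<integral>\<^sup>+ S. F S \<partial>?M))"
    using M.exp_moment_bound_high_probability[OF _ \<delta>_pos m'_pos] by blast
  have "S \<in> space ?M" if "S \<in> A" for S using that sets.sets_into_space[OF A(1)] by blast
  then have "ennreal (exp (m' * Dv (gibbs_risk (density \<mu> q) (emp_risk m S))
                                 (gibbs_risk (density \<mu> q) (true_risk D)))) \<le> F S"
    if "S \<in> A" and "q \<in> borel_measurable HM" "\<forall>f\<in>space HM. 0 \<le> q f"
      "prob_space (density \<mu> q)" "aligned (space HM) q p" for S q
    unfolding F_def using that m_pos m'_pos
    by (intro exp_Gibbs_risks_le_prior_exp_moment[OF c_meas \<mu>_sets \<mu>_inv p_meas p_nonneg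
          _ _ _ _ Dv_convex Dv_sym]) auto
  with A bound show ?thesis unfolding Let_def F_def by blast
qed

end
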